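(* A topological space is an MG-space if and only if it is a quotient space of some locally Menger space.
   Context: A space $X$ is Menger if for each sequence $(\mathcal{U}_n)$ of open covers of $X$ there is a sequence $(\mathcal{V}_n)$ with each $\mathcal{V}_n$ a finite subset of $\mathcal{U}_n$ and $\bigcup_{n}\bigcup\mathcal{V}_n=X$. A space $X$ is locally Menger if for each $x\in X$ there exist an open set $U$ and a Menger subspace $Y$ of $X$ with $x\in U\subseteq Y$. A space $X$ is Menger generated (an MG-space) if a subset $U\subseteq X$ is open in $X$ whenever $U\cap M$ is open in $M$ for every Menger subspace $M$ of $X$. *)

theory Defs
  imports "HOL-Analysis.Analysis"
begin

definition Menger_space :: "'a topology \<Rightarrow> bool" where
  "Menger_space X \<longleftrightarrow>
     (\<forall>\<U> :: nat \<Rightarrow> 'a set set.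
        (\<forall>n. (\<forall>U\<in>\<U> n. openin X U) \<and> topspace X \<subseteq> \<Union>(\<U> n)) \<longrightarrow>
        (\<exists>\<V> :: nat \<Rightarrow> 'a set set.
            (\<forall>n. \<V> n \<subseteq> \<U> n \<and> finite (\<V> n)) \<and>
            (\<Union>n. \<Union>(\<V> n)) = topspace X))"

definition Menger_subspace :: "'a topology \<Rightarrow> 'a set \<Rightarrow> bool" where
  "Menger_subspace X M \<longleftrightarrow> M \<subseteq> topspace X \<and> Menger_space (subtopology X M)"

definition locally_Menger :: "'a topology \<Rightarrow> bool" where
  "locally_Menger X \<longleftrightarrow>
     (\<forall>x\<in>topspace X. \<exists>U Y. openin X U \<and> Menger_subspace X Y \<and> x \<in> U \<and> U \<subseteq> Y)"

definition MG_space :: "'a topology \<Rightarrow> bool" where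
  "MG_space X \<longleftrightarrow>
     (\<forall>U. U \<subseteq> topspace X \<longrightarrow>
        (\<forall>M. Menger_subspace X M \<longrightarrow> openin (subtopology X M) (U \<inter> M)) \<longrightarrow>
        openin X U)"

end

theory Submission
  imports Defs
begin

text \<open>Continuous surjections preserve the Menger property. Hence, if \<open>f : Y \<rightarrow> X\<close> is a
  quotient map from a locally Menger space, a set \<open>U\<close> that is relatively open in every Menger
  subspace of \<open>X\<close> has an open preimage: around each point \<open>y\<close> of it there is an open \<open>V\<close> inside
  a Menger subspace \<open>Z\<close>, and \<open>U\<close> agrees on the Menger subspace \<open>f ` Z\<close> with an open set of \<open>X\<close>.
  Conversely, an MG-space is, by its very definition, the quotient of the disjoint sum of all its
  Menger subspaces under the projection; this sum is locally Menger, and the projection is onto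
  because singletons are Menger.\<close>

lemma Menger_space_continuous_map_image:
  assumes X: "Menger_space X" and f: "continuous_map X Y f" and surj: "f ` topspace X = topspace Y"
  shows "Menger_space Y"
  unfolding Menger_space_def
proof (intro allI impI)
  fix \<U> :: "nat \<Rightarrow> 'b set set"
  assume \<U>: "\<forall>n. (\<forall>U\<in>\<U> n. openin Y U) \<and> topspace Y \<subseteq> \<Union>(\<U> n)"
  define pre where "pre U = {x \<in> topspace X. f x \<in> U}" for U
  have cov: "\<forall>n. (\<forall>V\<in>pre ` \<U> n. openin X V) \<and> topspace X \<subseteq> \<Union>(pre ` \<U> n)"
    using \<U> f surj by (fastforce simp: pre_def openin_continuous_map_preimage)
  obtain \<V>' where \<V>': "\<forall>n. \<V>' n \<subseteq> pre ` \<U> n \<and> finite (\<V>' n)"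
    and cover: "(\<Union>n. \<Union>(\<V>' n)) = topspace X"
    using X[unfolded Menger_space_def, THEN spec[of _ "\<lambda>n. pre ` \<U> n"], THEN mp, OF cov]
    by (elim exE conjE)
  then have "\<forall>n. \<exists>\<F>. \<F> \<subseteq> \<U> n \<and> finite \<F> \<and> \<V>' n = pre ` \<F>"
    by (metis finite_subset_image)
  then obtain \<V> where \<V>: "\<forall>n. \<V> n \<subseteq> \<U> n \<and> finite (\<V> n) \<and> \<V>' n = pre ` \<V> n"
    by (rule choice[THEN exE])
  have "\<Union>(\<V> n) \<subseteq> topspace Y" for n
    using \<U> \<V> openin_subset by (metis Union_least subsetD)
  then have "(\<Union>n. \<Union>(\<V> n)) \<subseteq> topspace Y"
    by (rule UN_least)
  moreover have "topspace Y \<subseteq> (\<Union>n. \<Union>(\<V> n))"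
  proof
    fix y assume "y \<in> topspace Y"
    then obtain x where x: "x \<in> topspace X" "y = f x"
      using surj by auto
    then have "x \<in> (\<Union>n. \<Union>(\<V>' n))"
      using cover by simp
    then obtain n V where "V \<in> \<V>' n" "x \<in> V"
      by blast
    then obtain W where "W \<in> \<V> n" "x \<in> pre W"
      using \<V> by auto
    then show "y \<in> (\<Union>n. \<Union>(\<V> n))"
      using x by (auto simp: pre_def)
  qed
  ultimately show "\<exists>\<V>. (\<forall>n. \<V> n \<subseteq> \<U> n \<and> finite (\<V> n)) \<and> (\<Union>n. \<Union>(\<V> n)) = topspace Y"
    using \<V> by (intro exI[of _ \<V>]) auto
qed

lemma Menger_subspace_continuous_map_image:
  assumes f: "continuous_map X Y f" and Z: "Menger_subspace X Z"
  shows "Menger_subspace Y (f ` Z)"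
proof -
  have ZX: "Z \<subseteq> topspace X" and "Menger_space (subtopology X Z)"
    using Z by (auto simp: Menger_subspace_def)
  moreover have fZ: "f ` Z \<subseteq> topspace Y"
    using f ZX continuous_map_image_subset_topspace by blast
  moreover have "continuous_map (subtopology X Z) (subtopology Y (f ` Z)) f"
    using f ZX by (simp add: continuous_map_from_subtopology continuous_map_into_subtopology)
  moreover have "f ` topspace (subtopology X Z) = topspace (subtopology Y (f ` Z))"
    using ZX fZ by auto
  ultimately show ?thesis
    unfolding Menger_subspace_def using Menger_space_continuous_map_image by blast
qed

lemma compact_space_imp_Menger_space:
  assumes "compact_space X"
  shows "Menger_space X"
  unfolding Menger_space_def
proof (intro allI impI)
  fix \<U> :: "nat \<Rightarrow> 'a set set"
  assume \<U>: "\<forall>n. (\<forall>U\<in>\<U> n. openin X U) \<and> topspace X \<subseteq> \<Union>(\<U> n)"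
  then have "\<forall>n. \<exists>\<F>. finite \<F> \<and> \<F> \<subseteq> \<U> n \<and> topspace X \<subseteq> \<Union>\<F>"
    using assms by (simp add: compact_space_alt)
  then obtain \<V> where \<V>: "\<forall>n. finite (\<V> n) \<and> \<V> n \<subseteq> \<U> n \<and> topspace X \<subseteq> \<Union>(\<V> n)"
    by (rule choice[THEN exE])
  have "\<Union>(\<V> n) \<subseteq> topspace X" for n
    using \<U> \<V> openin_subset by (metis Union_least subsetD)
  then have "(\<Union>n. \<Union>(\<V> n)) \<subseteq> topspace X"
    by (rule UN_least)
  moreover have "topspace X \<subseteq> (\<Union>n. \<Union>(\<V> n))"
    using \<V> by (meson UN_upper UNIV_I subset_trans)
  ultimately show "\<exists>\<V>. (\<forall>n. \<V> n \<subseteq> \<U> n \<and> finite (\<V> n)) \<and> (\<Union>n. \<Union>(\<V> n)) = topspace X"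
    using \<V> by (intro exI[of _ \<V>]) auto
qed

lemma Menger_subspace_singleton:
  assumes "x \<in> topspace X"
  shows "Menger_subspace X {x}"
  using assms
  by (simp add: Menger_subspace_def compact_space_imp_Menger_space compact_space_subtopology
      finite_imp_compactin)

lemma Union_Menger_subspaces: "\<Union>{M. Menger_subspace X M} = topspace X"
proof
  show "\<Union>{M. Menger_subspace X M} \<subseteq> topspace X"
    by (auto simp: Menger_subspace_def)
  show "topspace X \<subseteq> \<Union>{M. Menger_subspace X M}"
  proof
    fix x assume "x \<in> topspace X"
    then have "Menger_subspace X {x}"
      by (rule Menger_subspace_singleton)
    then show "x \<in> \<Union>{M. Menger_subspace X M}"
      by blast
  qed
qed

lemma Menger_space_imp_locally_Menger:
  assumes "Menger_space X"
  shows "locally_Menger X"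
  unfolding locally_Menger_def Menger_subspace_def
proof
  fix x assume "x \<in> topspace X"
  then show "\<exists>U Y. openin X U \<and> (Y \<subseteq> topspace X \<and> Menger_space (subtopology X Y)) \<and> x \<in> U \<and> U \<subseteq> Y"
    using assms by (intro exI[of _ "topspace X"]) auto
qed

lemma locally_Menger_sum_topology:
  assumes "\<And>i. i \<in> I \<Longrightarrow> locally_Menger (X i)"
  shows "locally_Menger (sum_topology X I)"
  unfolding locally_Menger_def
proof
  fix p assume "p \<in> topspace (sum_topology X I)"
  then obtain i x where p: "p = (i, x)" and i: "i \<in> I" and x: "x \<in> topspace (X i)"
    by auto
  then obtain U Z where U: "openin (X i) U" and Z: "Menger_subspace (X i) Z" and "x \<in> U" "U \<subseteq> Z"
    using assms unfolding locally_Menger_def by blast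
  let ?inj = "\<lambda>x. (i, x)"
  have "openin (sum_topology X I) (?inj ` U)"
    using open_map_component_injection[OF i, of X] U unfolding open_map_def by blast
  moreover have "Menger_subspace (sum_topology X I) (?inj ` Z)"
    using Menger_subspace_continuous_map_image[OF continuous_map_component_injection[OF i, of X] Z] .
  moreover have "p \<in> ?inj ` U" "?inj ` U \<subseteq> ?inj ` Z"
    using p \<open>x \<in> U\<close> \<open>U \<subseteq> Z\<close> by auto
  ultimately show "\<exists>U Z. openin (sum_topology X I) U \<and> Menger_subspace (sum_topology X I) Z
      \<and> p \<in> U \<and> U \<subseteq> Z"
    by blast
qed

lemma locally_Menger_sum_Menger_subspaces:
  "locally_Menger (sum_topology (subtopology X) {M. Menger_subspace X M})"
  by (rule locally_Menger_sum_topology) (simp add: Menger_space_imp_locally_Menger Menger_subspace_def)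

lemma quotient_map_sum_topology_snd:
  assumes cover: "\<Union>\<M> = topspace X"
    and coherent: "\<And>U. \<lbrakk>U \<subseteq> topspace X; \<forall>M\<in>\<M>. openin (subtopology X M) (U \<inter> M)\<rbrakk> \<Longrightarrow> openin X U"
  shows "quotient_map (sum_topology (subtopology X) \<M>) X snd"
  unfolding quotient_map_def
proof (intro conjI allI impI)
  let ?Y = "sum_topology (subtopology X) \<M>"
  have top: "topspace ?Y = Sigma \<M> (\<lambda>M. M)"
    using cover by auto
  show "snd ` topspace ?Y = topspace X"
    unfolding top cover[symmetric] by force
  fix U assume U: "U \<subseteq> topspace X"
  let ?P = "{p \<in> topspace ?Y. snd p \<in> U}"
  have slice: "{x. (M, x) \<in> ?P} = U \<inter> M" if "M \<in> \<M>" for M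
    using that top by auto
  have "openin ?Y ?P \<longleftrightarrow> (\<forall>M\<in>\<M>. openin (subtopology X M) {x. (M, x) \<in> ?P})"
    unfolding openin_sum_topology by auto
  also have "\<dots> \<longleftrightarrow> (\<forall>M\<in>\<M>. openin (subtopology X M) (U \<inter> M))"
    using slice by simp
  also have "\<dots> \<longleftrightarrow> openin X U"
    using U coherent openin_subtopology_Int by blast
  finally show "openin ?Y ?P \<longleftrightarrow> openin X U" .
qed

lemma MG_space_imp_quotient_map_sum_Menger_subspaces:
  assumes "MG_space X"
  shows "quotient_map (sum_topology (subtopology X) {M. Menger_subspace X M}) X snd"
proof (rule quotient_map_sum_topology_snd[OF Union_Menger_subspaces])
  show "openin X U"
    if "U \<subseteq> topspace X" "\<forall>M\<in>{M. Menger_subspace X M}. openin (subtopology X M) (U \<inter> M)" for U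
    using assms that unfolding MG_space_def by simp
qed

lemma locally_Menger_quotient_imp_MG_space:
  assumes Y: "locally_Menger Y" and q: "quotient_map Y X f"
  shows "MG_space X"
  unfolding MG_space_def
proof (intro allI impI)
  fix U assume U: "U \<subseteq> topspace X"
    and coherent: "\<forall>M. Menger_subspace X M \<longrightarrow> openin (subtopology X M) (U \<inter> M)"
  have f: "continuous_map Y X f"
    using q by (rule quotient_imp_continuous_map)
  let ?P = "{y \<in> topspace Y. f y \<in> U}"
  have "openin Y ?P"
  proof (subst openin_subopen, intro ballI)
    fix y assume y: "y \<in> ?P"
    then obtain V Z where V: "openin Y V" "y \<in> V" "V \<subseteq> Z" and Z: "Menger_subspace Y Z"
      using Y unfolding locally_Menger_def by blast
    then have "openin (subtopology X (f ` Z)) (U \<inter> f ` Z)"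
      using coherent Menger_subspace_continuous_map_image[OF f] by blast
    then obtain G where G: "openin X G" "U \<inter> f ` Z = G \<inter> f ` Z"
      by (auto simp: openin_subtopology)
    let ?W = "V \<inter> {x \<in> topspace Y. f x \<in> G}"
    have "openin Y ?W"
      using V(1) openin_continuous_map_preimage[OF f G(1)] by (rule openin_Int)
    moreover have "y \<in> ?W" "?W \<subseteq> ?P"
      using y V G(2) by blast+
    ultimately show "\<exists>T. openin Y T \<and> y \<in> T \<and> T \<subseteq> ?P"
      by blast
  qed
  then show "openin X U"
    using q U unfolding quotient_map_def by blast
qed

theorem theorem4p12:
  fixes X :: "'a topology"
  shows "(MG_space X \<longrightarrow>
            (\<exists>(Y :: ('a set \<times> 'a) topology) f. locally_Menger Y \<and> quotient_map Y X f)) \<and>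
         (\<forall>(Y :: 'b topology) f. locally_Menger Y \<and> quotient_map Y X f \<longrightarrow> MG_space X)"
proof (intro conjI impI allI)
  assume "MG_space X"
  then show "\<exists>(Y :: ('a set \<times> 'a) topology) f. locally_Menger Y \<and> quotient_map Y X f"
    using locally_Menger_sum_Menger_subspaces MG_space_imp_quotient_map_sum_Menger_subspaces by blast
next
  fix Y :: "'b topology" and f
  assume "locally_Menger Y \<and> quotient_map Y X f"
  then show "MG_space X"
    using locally_Menger_quotient_imp_MG_space by blast
qed

end
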